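(* Let $U\subset\mathbb{R}^2$ be open and let $f(u,v)=(x(u,v),y(u,v),z(u,v))$ be a non-degenerate $d$-minimal immersion $U\to\mathbb{R}^{0,2,1}$ such that $(u,v)$ are isothermal coordinates. Put $w=u+iv$ and $$\varphi_1=x_u-ix_v,\quad \varphi_2=y_u-iy_v,\quad \varphi_3=z_u-iz_v. \qquad(\ast)$$ Then $\varphi_1,\varphi_2,\varphi_3$ are holomorphic in $w$ and satisfy $$|\varphi_1|^2+|\varphi_2|^2>0,\qquad \varphi_1^2+\varphi_2^2=0. \qquad(\ast\ast)$$ Moreover $(f_u,f_u)=(f_v,f_v)=\frac12(|\varphi_1|^2+|\varphi_2|^2)$. Conversely, let $U\subset\mathbb{C}$ be a simply connected domain and $\varphi_1,\varphi_2,\varphi_3$ holomorphic functions on $U$ satisfying $(\ast\ast)$. Then, fixing $w_0\in U$, the map $f(u,v)=\mathrm{Re}\int_{w_0}^{w}(\varphi_1,\varphi_2,\varphi_3)\,dw$ (with $w=u+iv$) is a well-defined non-degenerate $d$-minimal immersion $U\to\mathbb{R}^{0,2,1}$ satisfying $(\ast)$, and $(u,v)$ are isothermal coordinates for it.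
   Context: $\mathbb{R}^{0,2,1}$ denotes $\mathbb{R}^3$ with coordinates $(x,y,z)$ and the degenerate form $(\cdot,\cdot)=dx^2+dy^2$. A non-degenerate immersion is a $C^\infty$ immersion $f$ of a 2-manifold into $\mathbb{R}^{0,2,1}$ whose induced metric $g=f^*(\cdot,\cdot)$ is positive definite. Let $\xi=(0,0,1)$ and let $d$ be the standard flat connection of $\mathbb{R}^3$. Writing $d_X(df(Y))=df(\nabla_XY)+h(X,Y)\xi$, with $\nabla$ the Levi-Civita connection of $g$, defines the second fundamental form $h$. $f$ is $d$-minimal if $\mathrm{tr}_gh\equiv0$. Coordinates $(u,v)$ are isothermal if $(f_u,f_u)=(f_v,f_v)$ and $(f_u,f_v)=0$. *)

theory Defs
  imports "HOL-Complex_Analysis.Complex_Analysis"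
begin

text \<open>We identify the parameter plane R^2 with C via w = u + i v.
  Coordinate direction 0 is u (direction 1), coordinate direction 1 is v (direction i).\<close>

definition dir :: "nat \<Rightarrow> complex" where
  "dir k = (if k = 0 then 1 else \<i>)"

definition pd :: "nat \<Rightarrow> (complex \<Rightarrow> 'a::real_normed_vector) \<Rightarrow> complex \<Rightarrow> 'a" where
  "pd k F w = vector_derivative (\<lambda>t::real. F (w + t *\<^sub>R dir k)) (at 0)"

fun iter_pd :: "nat list \<Rightarrow> (complex \<Rightarrow> 'a::real_normed_vector) \<Rightarrow> complex \<Rightarrow> 'a" where
  "iter_pd [] F = F"
| "iter_pd (k # ks) F = pd k (iter_pd ks F)"

definition smooth_on :: "complex set \<Rightarrow> (complex \<Rightarrow> 'a::real_normed_vector) \<Rightarrow> bool" where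
  "smooth_on U F \<longleftrightarrow> (\<forall>ks. set ks \<subseteq> {0,1} \<longrightarrow>
      iter_pd ks F differentiable_on U \<and> continuous_on U (iter_pd ks F))"

text \<open>The degenerate form dx^2 + dy^2 of R^{0,2,1} and the vector xi = (0,0,1).\<close>
definition dform :: "real^3 \<Rightarrow> real^3 \<Rightarrow> real" where
  "dform a b = a$1 * b$1 + a$2 * b$2"

definition xi :: "real^3" where
  "xi = axis 3 1"

definition gmet :: "(complex \<Rightarrow> real^3) \<Rightarrow> nat \<Rightarrow> nat \<Rightarrow> complex \<Rightarrow> real" where
  "gmet f i j w = dform (pd i f w) (pd j f w)"

definition gdet :: "(complex \<Rightarrow> real^3) \<Rightarrow> complex \<Rightarrow> real" where
  "gdet f w = gmet f 0 0 w * gmet f 1 1 w - gmet f 0 1 w * gmet f 1 0 w"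

definition ginv :: "(complex \<Rightarrow> real^3) \<Rightarrow> nat \<Rightarrow> nat \<Rightarrow> complex \<Rightarrow> real" where
  "ginv f i j w =
     (if i = 0 \<and> j = 0 then gmet f 1 1 w
      else if i = 1 \<and> j = 1 then gmet f 0 0 w
      else - gmet f i j w) / gdet f w"

definition christoffel :: "(complex \<Rightarrow> real^3) \<Rightarrow> nat \<Rightarrow> nat \<Rightarrow> nat \<Rightarrow> complex \<Rightarrow> real" where
  "christoffel f k i j w = (1/2) * (\<Sum>l<2. ginv f k l w *
      (pd i (gmet f j l) w + pd j (gmet f i l) w - pd l (gmet f i j) w))"

definition immersion :: "complex set \<Rightarrow> (complex \<Rightarrow> real^3) \<Rightarrow> bool" where
  "immersion U f \<longleftrightarrow> smooth_on U f \<and>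
     (\<forall>w\<in>U. \<forall>a b::real. a *\<^sub>R pd 0 f w + b *\<^sub>R pd 1 f w = 0 \<longrightarrow> a = 0 \<and> b = 0)"

definition nondeg_immersion :: "complex set \<Rightarrow> (complex \<Rightarrow> real^3) \<Rightarrow> bool" where
  "nondeg_immersion U f \<longleftrightarrow> immersion U f \<and>
     (\<forall>w\<in>U. \<forall>a b::real. (a, b) \<noteq> (0, 0) \<longrightarrow>
        dform (a *\<^sub>R pd 0 f w + b *\<^sub>R pd 1 f w) (a *\<^sub>R pd 0 f w + b *\<^sub>R pd 1 f w) > 0)"

text \<open>d-minimal: the second fundamental form h, defined by
  d_X(df(Y)) = df(nabla_X Y) + h(X,Y) xi, has vanishing g-trace.\<close>
definition d_minimal :: "complex set \<Rightarrow> (complex \<Rightarrow> real^3) \<Rightarrow> bool" where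
  "d_minimal U f \<longleftrightarrow> (\<exists>h :: nat \<Rightarrow> nat \<Rightarrow> complex \<Rightarrow> real.
     (\<forall>w\<in>U. \<forall>i<2. \<forall>j<2.
        pd i (pd j f) w = (\<Sum>k<2. christoffel f k i j w *\<^sub>R pd k f w) + h i j w *\<^sub>R xi) \<and>
     (\<forall>w\<in>U. (\<Sum>i<2. \<Sum>j<2. ginv f i j w * h i j w) = 0))"

definition isothermal :: "complex set \<Rightarrow> (complex \<Rightarrow> real^3) \<Rightarrow> bool" where
  "isothermal U f \<longleftrightarrow> (\<forall>w\<in>U. gmet f 0 0 w = gmet f 1 1 w \<and> gmet f 0 1 w = 0)"

definition phi :: "(complex \<Rightarrow> real^3) \<Rightarrow> 3 \<Rightarrow> complex \<Rightarrow> complex" where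
  "phi f k w = Complex (pd 0 (\<lambda>z. f z $ k) w) (- pd 1 (\<lambda>z. f z $ k) w)"

end

theory Submission
  imports Defs
begin

text \<open>In isothermal coordinates the Christoffel symbols satisfy
  \<open>\<Gamma>\<^sup>k\<^sub>u\<^sub>u + \<Gamma>\<^sup>k\<^sub>v\<^sub>v = 0\<close>, and since \<open>f\<^sub>u, f\<^sub>v\<close> project to an orthogonal basis of the
  \<open>xy\<close>-plane, the horizontal part of every \<open>f\<^sub>i\<^sub>j\<close> is \<open>\<Sigma>\<^sub>k \<Gamma>\<^sup>k\<^sub>i\<^sub>j f\<^sub>k\<close>.  Hence the
  second fundamental form is the vertical part of the second derivatives, and \<open>f\<close> is
  \<open>d\<close>-minimal iff it is harmonic.  For harmonic \<open>f\<close> the Cauchy-Riemann equations for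
  \<open>\<phi>\<^sub>k = (f\<^sub>k)\<^sub>u - i (f\<^sub>k)\<^sub>v\<close> are \<open>\<Delta>f\<^sub>k = 0\<close> and the symmetry of the mixed partials,
  while the identities \<open>|\<phi>\<^sub>1|\<^sup>2 + |\<phi>\<^sub>2|\<^sup>2 = g\<^sub>u\<^sub>u + g\<^sub>v\<^sub>v\<close> and
  \<open>\<phi>\<^sub>1\<^sup>2 + \<phi>\<^sub>2\<^sup>2 = g\<^sub>u\<^sub>u - g\<^sub>v\<^sub>v - 2i g\<^sub>u\<^sub>v\<close> turn isothermality into the conditions on
  \<open>\<phi>\<^sub>1, \<phi>\<^sub>2\<close>.  Conversely, the real part of a primitive of \<open>(\<phi>\<^sub>1, \<phi>\<^sub>2, \<phi>\<^sub>3)\<close> is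
  harmonic, has the \<open>\<phi>\<^sub>k\<close> as its data, and is therefore a \<open>d\<close>-minimal immersion in
  isothermal coordinates.\<close>

section \<open>Partial derivatives\<close>

lemma norm_dir [simp]: "norm (dir k) = 1"
  by (simp add: dir_def)

lemma has_vector_derivative_line:
  assumes "(F has_derivative F') (at (q + s *\<^sub>R d))"
  shows "((\<lambda>t::real. F (q + t *\<^sub>R d)) has_vector_derivative F' d) (at s)"
proof -
  have "((\<lambda>t::real. q + t *\<^sub>R d) has_derivative (\<lambda>t. t *\<^sub>R d)) (at s)"
    by (auto intro!: derivative_eq_intros)
  from diff_chain_at[OF this assms]
  have "((\<lambda>t. F (q + t *\<^sub>R d)) has_derivative (\<lambda>t. F' (t *\<^sub>R d))) (at s)"
    by (simp add: o_def)
  then show ?thesis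
    using has_derivative_linear[OF assms] by (simp add: has_vector_derivative_def linear_scale)
qed

lemma pd_has_derivative:
  assumes "(F has_derivative F') (at w)"
  shows "pd k F w = F' (dir k)"
  unfolding pd_def
  by (rule vector_derivative_at, rule has_vector_derivative_line) (use assms in simp)

lemma has_derivative_pd_expansion:
  assumes "(F has_derivative F') (at w)"
  shows "F' h = Re h *\<^sub>R pd 0 F w + Im h *\<^sub>R pd 1 F w"
proof -
  have "h = Re h *\<^sub>R 1 + Im h *\<^sub>R \<i>"
    by (simp add: complex_eq_iff)
  then have "F' h = F' (Re h *\<^sub>R 1 + Im h *\<^sub>R \<i>)"
    by simp
  also have "\<dots> = Re h *\<^sub>R F' 1 + Im h *\<^sub>R F' \<i>"
    using has_derivative_linear[OF assms] by (simp add: linear_add linear_scale)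
  finally show ?thesis
    using pd_has_derivative[OF assms, of 0] pd_has_derivative[OF assms, of 1] by (simp add: dir_def)
qed

lemma pd_cong:
  assumes "open U" "w \<in> U" "\<And>z. z \<in> U \<Longrightarrow> F z = G z"
  shows "pd k F w = pd k G w"
proof -
  have "open {t::real. w + t *\<^sub>R dir k \<in> U}"
    using open_vimage[OF assms(1), of "\<lambda>t::real. w + t *\<^sub>R dir k"]
    by (simp add: vimage_def continuous_intros)
  moreover have "(0::real) \<in> {t. w + t *\<^sub>R dir k \<in> U}"
    using assms by simp
  ultimately have "\<forall>\<^sub>F t in nhds 0. F (w + t *\<^sub>R dir k) = G (w + t *\<^sub>R dir k)"
    using assms(3) by (auto simp: eventually_nhds)
  then show ?thesis
    unfolding pd_def by (intro vector_derivative_cong_eq) auto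
qed

lemma pd_const: "pd k (\<lambda>z. c) w = 0"
  using pd_has_derivative[OF has_derivative_const[of c "at w"]] by simp

lemma differentiable_transform_open:
  assumes "open U" "w \<in> U" "\<And>z. z \<in> U \<Longrightarrow> F z = G z" "F differentiable (at w)"
  shows "G differentiable (at w)"
  using assms has_derivative_transform_within_open[of F _ w UNIV U G]
  unfolding differentiable_def by blast

lemma differentiable_vec_nth:
  fixes F :: "complex \<Rightarrow> real^'n"
  assumes "F differentiable (at w)"
  shows "(\<lambda>z. F z $ c) differentiable (at w)"
  using assms bounded_linear.has_derivative[OF bounded_linear_vec_nth]
  unfolding differentiable_def by blast

lemma pd_vec_nth:
  fixes F :: "complex \<Rightarrow> real^'n"
  assumes "F differentiable (at w)"
  shows "pd k (\<lambda>z. F z $ c) w = pd k F w $ c"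
proof -
  obtain F' where F': "(F has_derivative F') (at w)"
    using assms unfolding differentiable_def by blast
  have "((\<lambda>z. F z $ c) has_derivative (\<lambda>h. F' h $ c)) (at w)"
    using bounded_linear.has_derivative[OF bounded_linear_vec_nth F'] .
  then show ?thesis
    using pd_has_derivative F' by metis
qed

lemma pd_dform:
  assumes "A differentiable (at w)" "B differentiable (at w)"
  shows "pd k (\<lambda>z. dform (A z) (B z)) w = dform (pd k A w) (B w) + dform (A w) (pd k B w)"
proof -
  obtain A' B' where A': "(A has_derivative A') (at w)" and B': "(B has_derivative B') (at w)"
    using assms unfolding differentiable_def by blast
  have "((\<lambda>z. A z $ c) has_derivative (\<lambda>h. A' h $ c)) (at w)"
    "((\<lambda>z. B z $ c) has_derivative (\<lambda>h. B' h $ c)) (at w)" for c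
    using bounded_linear.has_derivative[OF bounded_linear_vec_nth] A' B' by blast+
  then have "((\<lambda>z. dform (A z) (B z)) has_derivative
      (\<lambda>h. dform (A' h) (B w) + dform (A w) (B' h))) (at w)"
    unfolding dform_def by (auto intro!: derivative_eq_intros simp: algebra_simps)
  then show ?thesis
    using pd_has_derivative A' B' by metis
qed

section \<open>Symmetry of second partial derivatives\<close>

lemma has_real_derivative_line_pd:
  fixes F :: "complex \<Rightarrow> real"
  assumes "F differentiable (at (q + s *\<^sub>R dir k))"
  shows "((\<lambda>t. F (q + t *\<^sub>R dir k)) has_real_derivative pd k F (q + s *\<^sub>R dir k)) (at s)"
proof -
  obtain F' where F': "(F has_derivative F') (at (q + s *\<^sub>R dir k))"
    using assms unfolding differentiable_def by blast
  show ?thesis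
    unfolding has_real_derivative_iff_has_vector_derivative pd_has_derivative[OF F']
    by (rule has_vector_derivative_line[OF F'])
qed

text \<open>The mixed second difference of \<open>F\<close> at scale \<open>h\<close> is \<open>h\<^sup>2 \<partial>\<^sub>b\<partial>\<^sub>a F + o(h\<^sup>2)\<close>:
  the mean value theorem in direction \<open>a\<close> reduces it to an increment of \<open>\<partial>\<^sub>a F\<close>,
  which is controlled by the differentiability of \<open>\<partial>\<^sub>a F\<close> at \<open>w\<close>.\<close>

lemma mixed_second_difference:
  fixes F :: "complex \<Rightarrow> real"
  assumes U: "open U" "w \<in> U" "\<forall>z\<in>U. F differentiable (at z)"
    and P: "pd a F differentiable (at w)" and e: "e > 0"
  shows "\<exists>\<delta>>0. \<forall>h. 0 < h \<and> h < \<delta> \<longrightarrow>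
    \<bar>(F (w + h *\<^sub>R dir a + h *\<^sub>R dir b) - F (w + h *\<^sub>R dir a) - F (w + h *\<^sub>R dir b) + F w)
      - h\<^sup>2 * pd b (pd a F) w\<bar> \<le> 3 * e * h\<^sup>2"
proof -
  obtain P' where P': "(pd a F has_derivative P') (at w)"
    using P unfolding differentiable_def by blast
  have lin: "linear P'" using P' has_derivative_linear by blast
  obtain d0 where d0: "d0 > 0" "\<forall>y. norm (y - w) < d0 \<longrightarrow>
      norm (pd a F y - pd a F w - P' (y - w)) \<le> e * norm (y - w)"
    using P' e unfolding has_derivative_at_alt by blast
  obtain r where r: "r > 0" "ball w r \<subseteq> U" using U openE by blast
  define \<delta> where "\<delta> = min (d0/2) (r/2)"
  have "\<bar>(F (w + h *\<^sub>R dir a + h *\<^sub>R dir b) - F (w + h *\<^sub>R dir a) - F (w + h *\<^sub>R dir b) + F w)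
      - h\<^sup>2 * pd b (pd a F) w\<bar> \<le> 3 * e * h\<^sup>2" if h: "0 < h" "h < \<delta>" for h
  proof -
    define g where "g t = F (w + h *\<^sub>R dir b + t *\<^sub>R dir a) - F (w + t *\<^sub>R dir a)" for t
    have inU: "w + p \<in> U" if "norm p < r" for p
      using r that by (auto simp: dist_norm)
    have der: "(g has_real_derivative
        (pd a F (w + h *\<^sub>R dir b + t *\<^sub>R dir a) - pd a F (w + t *\<^sub>R dir a))) (at t)"
      if t: "0 \<le> t" "t \<le> h" for t
    proof -
      have "norm (h *\<^sub>R dir b + t *\<^sub>R dir a) \<le> h + t"
        using norm_triangle_ineq[of "h *\<^sub>R dir b" "t *\<^sub>R dir a"] t h by simp
      then have "F differentiable (at (w + h *\<^sub>R dir b + t *\<^sub>R dir a))"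
        using U(3) inU[of "h *\<^sub>R dir b + t *\<^sub>R dir a"] t h by (simp add: add.assoc \<delta>_def)
      moreover have "F differentiable (at (w + t *\<^sub>R dir a))"
        using U(3) inU[of "t *\<^sub>R dir a"] t h by (simp add: \<delta>_def)
      ultimately show ?thesis
        unfolding g_def by (intro DERIV_diff has_real_derivative_line_pd)
    qed
    then obtain \<theta> where th: "0 < \<theta>" "\<theta> < h"
      "g h - g 0 = h * (pd a F (w + h *\<^sub>R dir b + \<theta> *\<^sub>R dir a) - pd a F (w + \<theta> *\<^sub>R dir a))"
      using MVT2[of 0 h g, OF h(1) der] by auto
    define y1 where "y1 = w + h *\<^sub>R dir b + \<theta> *\<^sub>R dir a"
    define y2 where "y2 = w + \<theta> *\<^sub>R dir a"
    have ny1: "norm (y1 - w) \<le> h + \<theta>"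
      using norm_triangle_ineq[of "h *\<^sub>R dir b" "\<theta> *\<^sub>R dir a"] th h by (simp add: y1_def)
    have ny2: "norm (y2 - w) = \<theta>" using th by (simp add: y2_def)
    have "P' (y1 - w) - P' (y2 - w) = P' (h *\<^sub>R dir b)"
      using lin by (simp add: y1_def y2_def flip: linear_diff)
    also have "\<dots> = h * P' (dir b)"
      using linear_scale[OF lin] by simp
    finally have lin1: "P' (y1 - w) - P' (y2 - w) = h * P' (dir b)" .
    have "norm (pd a F y1 - pd a F w - P' (y1 - w)) \<le> e * norm (y1 - w)"
      using d0(2) ny1 th h by (simp add: \<delta>_def)
    moreover have "norm (pd a F y2 - pd a F w - P' (y2 - w)) \<le> e * norm (y2 - w)"
      using d0(2)[rule_format, of y2] ny2 th h by (simp add: \<delta>_def)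
    ultimately have "\<bar>pd a F y1 - pd a F y2 - h * P' (dir b)\<bar> \<le> e * norm (y1 - w) + e * norm (y2 - w)"
      using lin1 by simp
    also have "\<dots> \<le> e * (h + \<theta>) + e * \<theta>"
      using ny1 ny2 e by (intro add_mono mult_left_mono) auto
    also have "\<dots> \<le> 3 * e * h" using th e by (simp add: algebra_simps)
    finally have bnd: "\<bar>pd a F y1 - pd a F y2 - h * P' (dir b)\<bar> \<le> 3 * e * h" .
    have "g h - g 0 = F (w + h *\<^sub>R dir a + h *\<^sub>R dir b) - F (w + h *\<^sub>R dir a) - F (w + h *\<^sub>R dir b) + F w"
      by (simp add: g_def algebra_simps)
    moreover have "(g h - g 0) - h\<^sup>2 * P' (dir b) = h * (pd a F y1 - pd a F y2 - h * P' (dir b))"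
      using th(3) by (simp add: y1_def y2_def power2_eq_square algebra_simps)
    moreover have "h * \<bar>pd a F y1 - pd a F y2 - h * P' (dir b)\<bar> \<le> 3 * e * h\<^sup>2"
      using mult_left_mono[OF bnd, of h] h by (simp add: power2_eq_square)
    ultimately show ?thesis
      using h pd_has_derivative[OF P'] by (simp add: abs_mult)
  qed
  moreover have "\<delta> > 0" using d0 r by (simp add: \<delta>_def)
  ultimately show ?thesis by blast
qed

lemma pd_commute_real:
  fixes F :: "complex \<Rightarrow> real"
  assumes U: "open U" "w \<in> U" "\<forall>z\<in>U. F differentiable (at z)"
    and "pd 0 F differentiable (at w)" "pd 1 F differentiable (at w)"
  shows "pd 1 (pd 0 F) w = pd 0 (pd 1 F) w"
proof (rule ccontr)
  let ?A = "pd 1 (pd 0 F) w" and ?B = "pd 0 (pd 1 F) w"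
  assume ne: "?A \<noteq> ?B"
  define e where "e = \<bar>?A - ?B\<bar> / 12"
  have e: "e > 0" using ne by (simp add: e_def)
  obtain d1 where d1: "d1 > 0" "\<forall>h. 0 < h \<and> h < d1 \<longrightarrow>
    \<bar>(F (w + h *\<^sub>R dir 0 + h *\<^sub>R dir 1) - F (w + h *\<^sub>R dir 0) - F (w + h *\<^sub>R dir 1) + F w)
      - h\<^sup>2 * ?A\<bar> \<le> 3 * e * h\<^sup>2"
    using mixed_second_difference[OF U assms(4) e, of 1] by blast
  obtain d2 where d2: "d2 > 0" "\<forall>h. 0 < h \<and> h < d2 \<longrightarrow>
    \<bar>(F (w + h *\<^sub>R dir 1 + h *\<^sub>R dir 0) - F (w + h *\<^sub>R dir 1) - F (w + h *\<^sub>R dir 0) + F w)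
      - h\<^sup>2 * ?B\<bar> \<le> 3 * e * h\<^sup>2"
    using mixed_second_difference[OF U assms(5) e, of 0] by blast
  define h where "h = min d1 d2 / 2"
  have h: "0 < h" "h < d1" "h < d2" using d1 d2 by (auto simp: h_def)
  have sw: "w + h *\<^sub>R dir 1 + h *\<^sub>R dir 0 = w + h *\<^sub>R dir 0 + h *\<^sub>R dir 1"
    by (simp add: algebra_simps)
  have "\<bar>h\<^sup>2 * ?A - h\<^sup>2 * ?B\<bar> \<le> 6 * e * h\<^sup>2"
    using d1(2)[rule_format, OF conjI[OF h(1,2)]] d2(2)[rule_format, OF conjI[OF h(1,3)], unfolded sw]
    by linarith
  then have "h\<^sup>2 * \<bar>?A - ?B\<bar> \<le> h\<^sup>2 * (6 * e)"
    by (simp add: abs_mult mult.assoc mult.commute flip: right_diff_distrib)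
  then have "\<bar>?A - ?B\<bar> \<le> 6 * e" using h by simp
  then show False using e by (simp add: e_def)
qed

lemma smooth_on_differentiable_at:
  assumes "open U" "smooth_on U f" "set ks \<subseteq> {0,1}" "z \<in> U"
  shows "iter_pd ks f differentiable (at z)"
  using assms unfolding smooth_on_def by (simp add: differentiable_on_eq_differentiable_at)

lemma pd_pd_vec_nth:
  fixes f :: "complex \<Rightarrow> real^'n"
  assumes U: "open U" "smooth_on U f" "w \<in> U" and j: "j \<in> {0,1}"
  shows "pd k (pd j (\<lambda>z. f z $ c)) w = pd k (pd j f) w $ c"
    and "pd j (\<lambda>z. f z $ c) differentiable (at w)"
proof -
  have pd_nth: "pd j (\<lambda>z. f z $ c) z = pd j f z $ c" if "z \<in> U" for z
    using smooth_on_differentiable_at[OF U(1,2), of "[]"] that by (simp add: pd_vec_nth)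
  have pd_diff: "pd j f differentiable (at w)"
    using smooth_on_differentiable_at[OF U(1,2), of "[j]"] U(3) j by simp
  show "pd k (pd j (\<lambda>z. f z $ c)) w = pd k (pd j f) w $ c"
    using pd_cong[OF U(1,3) pd_nth] pd_vec_nth[OF pd_diff] by simp
  show "pd j (\<lambda>z. f z $ c) differentiable (at w)"
    using differentiable_transform_open[OF U(1,3), of "\<lambda>z. pd j f z $ c"] pd_nth
      differentiable_vec_nth[OF pd_diff] by simp
qed

lemma smooth_pd_commute:
  fixes f :: "complex \<Rightarrow> real^'n"
  assumes U: "open U" "smooth_on U f" "w \<in> U" and ij: "i < 2" "j < 2"
  shows "pd i (pd j f) w = pd j (pd i f) w"
proof -
  have "pd 1 (pd 0 f) w $ c = pd 0 (pd 1 f) w $ c" for c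
  proof -
    have "\<forall>z\<in>U. (\<lambda>z. f z $ c) differentiable (at z)"
      using smooth_on_differentiable_at[OF U(1,2), of "[]"] by (simp add: differentiable_vec_nth)
    from pd_commute_real[OF U(1,3) this pd_pd_vec_nth(2)[OF U, of 0] pd_pd_vec_nth(2)[OF U, of 1]]
    show ?thesis
      using pd_pd_vec_nth(1)[OF U] by simp
  qed
  then have "pd 1 (pd 0 f) w = pd 0 (pd 1 f) w"
    by (simp add: vec_eq_iff)
  with ij show ?thesis
    by (cases i; cases j) (auto simp: less_2_cases_iff)
qed

section \<open>Christoffel symbols in isothermal coordinates\<close>

lemma sum_lessThan_2: "(\<Sum>l<(2::nat). X l) = X 0 + X 1"
  by (simp add: numeral_2_eq_2)

lemma gmet_sym: "gmet f i j = gmet f j i"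
  by (simp add: gmet_def dform_def mult.commute fun_eq_iff)

lemma ginv_isothermal:
  assumes "isothermal U f" "w \<in> U" "k < 2" "l < 2"
  shows "ginv f k l w = (if k = l then 1 / gmet f 0 0 w else 0)"
proof -
  have "gmet f 1 1 w = gmet f 0 0 w" "gmet f 0 1 w = 0" "gmet f 1 0 w = 0"
    using assms(1,2) unfolding isothermal_def by (auto simp: gmet_def dform_def mult.commute)
  then show ?thesis
    using assms(3,4) by (auto simp: ginv_def gdet_def less_2_cases_iff power2_eq_square)
qed

lemma christoffel_trace_isothermal:
  assumes "open U" "isothermal U f" "w \<in> U" "k < 2"
  shows "christoffel f k 0 0 w + christoffel f k 1 1 w = 0"
proof -
  have "pd i (gmet f 1 1) w = pd i (gmet f 0 0) w" for i
    by (rule pd_cong[OF assms(1,3)]) (use assms(2) in \<open>simp add: isothermal_def\<close>)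
  moreover have "pd i (gmet f 0 1) w = 0" for i
    using pd_cong[OF assms(1,3), of "gmet f 0 1" "\<lambda>_. 0"] pd_const assms(2)
    by (simp add: isothermal_def)
  moreover have "pd i (gmet f 1 0) w = 0" for i
    unfolding gmet_sym[of f 1 0] by fact
  ultimately show ?thesis
    using ginv_isothermal[OF assms(2,3)] assms(4)
    by (auto simp: christoffel_def sum_lessThan_2 less_2_cases_iff field_simps)
qed

text \<open>Differentiating \<open>g\<^sub>j\<^sub>l = (f\<^sub>j, f\<^sub>l)\<close> and using the symmetry of \<open>f\<^sub>i\<^sub>j\<close>, the bracket in the
  definition of the Christoffel symbols collapses to \<open>2 (f\<^sub>i\<^sub>j, f\<^sub>l)\<close>.\<close>

lemma christoffel_eq_dform:
  assumes U: "open U" "smooth_on U f" "w \<in> U" and ij: "i < 2" "j < 2"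
  shows "christoffel f k i j w = (\<Sum>l<2. ginv f k l w * dform (pd i (pd j f) w) (pd l f w))"
proof -
  define D where "D i j l = dform (pd i (pd j f) w) (pd l f w)" for i j l
  have diff: "pd j f differentiable (at w)" if "j < 2" for j
    using smooth_on_differentiable_at[OF U(1,2), of "[j]"] U(3) that
    by (auto simp: less_2_cases_iff)
  have pd_gmet: "pd i (gmet f j l) w = D i j l + D i l j" if "j < 2" "l < 2" for i j l
    using pd_dform[OF diff diff] that unfolding gmet_def[abs_def] D_def
    by (auto simp: dform_def mult.commute)
  have D_sym: "D i j l = D j i l" if "i < 2" "j < 2" for i j l
    using smooth_pd_commute[OF U that] by (simp add: D_def)
  have "pd i (gmet f j l) w + pd j (gmet f i l) w - pd l (gmet f i j) w = 2 * D i j l"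
    if "l < 2" for l
    using pd_gmet ij that D_sym[of i j] D_sym[of i l] D_sym[of j l] by simp
  then show ?thesis
    by (simp add: christoffel_def D_def sum_lessThan_2)
qed

lemma planar_orthogonal_expansion:
  fixes a1 a2 b1 b2 v1 v2 lam :: real
  assumes a: "a1 * a1 + a2 * a2 = lam" and b: "b1 * b1 + b2 * b2 = lam"
    and ab: "a1 * b1 + a2 * b2 = 0" and lam: "lam > 0"
  shows "lam * v1 = (v1 * a1 + v2 * a2) * a1 + (v1 * b1 + v2 * b2) * b1"
proof -
  txt \<open>By Lagrange's identity \<open>d\<^sup>2 = \<lambda>\<^sup>2\<close>, so \<open>b\<close> is \<open>a\<close> turned by a right angle; hence the
    columns of the matrix with rows \<open>a\<close>, \<open>b\<close> are orthogonal of squared length \<open>\<lambda>\<close> too.\<close>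
  define d where "d = a1 * b2 - a2 * b1"
  have "d * d = lam * lam"
  proof -
    have "d * d = (a1 * a1 + a2 * a2) * (b1 * b1 + b2 * b2) - (a1 * b1 + a2 * b2) * (a1 * b1 + a2 * b2)"
      by (simp add: d_def algebra_simps)
    then show ?thesis using a b ab by simp
  qed
  moreover have "lam * b1 + a2 * d = a1 * (a1 * b1 + a2 * b2)"
    "lam * b2 - a1 * d = a2 * (a1 * b1 + a2 * b2)"
    unfolding d_def a[symmetric] by algebra+
  then have "lam * b1 = - a2 * d" "lam * b2 = a1 * d"
    using ab by simp_all
  ultimately have "lam * lam * (a1 * a1 + b1 * b1) = lam * lam * lam"
    "lam * lam * (a1 * a2 + b1 * b2) = 0"
    using a by algebra+
  then have "a1 * a1 + b1 * b1 = lam" "a1 * a2 + b1 * b2 = 0"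
    using lam by simp_all
  moreover have "(v1 * a1 + v2 * a2) * a1 + (v1 * b1 + v2 * b2) * b1
      = v1 * (a1 * a1 + b1 * b1) + v2 * (a1 * a2 + b1 * b2)"
    by algebra
  ultimately show ?thesis by simp
qed

lemma gauss_formula_horizontal:
  assumes U: "open U" "smooth_on U f" "w \<in> U" and iso: "isothermal U f"
    and pos: "gmet f 0 0 w > 0" and ij: "i < 2" "j < 2" and c: "c = 1 \<or> c = 2"
  shows "pd i (pd j f) w $ c = (\<Sum>k<2. christoffel f k i j w *\<^sub>R pd k f w) $ c"
proof -
  let ?lam = "gmet f 0 0 w" and ?v = "pd i (pd j f) w" and ?a = "pd 0 f w" and ?b = "pd 1 f w"
  have christ: "christoffel f k i j w = dform ?v (pd k f w) / ?lam" if "k < 2" for k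
    using christoffel_eq_dform[OF U ij, of k] ginv_isothermal[OF iso U(3) that] that
    by (auto simp: sum_lessThan_2 less_2_cases_iff)
  have a: "?a $ 1 * ?a $ 1 + ?a $ 2 * ?a $ 2 = ?lam" and b: "?b $ 1 * ?b $ 1 + ?b $ 2 * ?b $ 2 = ?lam"
    and ab: "?a $ 1 * ?b $ 1 + ?a $ 2 * ?b $ 2 = 0"
    using iso U(3) by (auto simp: isothermal_def gmet_def dform_def)
  have "?lam * ?v $ c = dform ?v ?a * ?a $ c + dform ?v ?b * ?b $ c"
    using c
  proof
    assume "c = 1"
    then show ?thesis
      using planar_orthogonal_expansion[OF a b ab pos, of "?v $ 1" "?v $ 2"]
      by (simp add: dform_def mult.commute)
  next
    assume "c = 2"
    moreover have "?a $ 2 * ?a $ 2 + ?a $ 1 * ?a $ 1 = ?lam" "?b $ 2 * ?b $ 2 + ?b $ 1 * ?b $ 1 = ?lam"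
      "?a $ 2 * ?b $ 2 + ?a $ 1 * ?b $ 1 = 0"
      using a b ab by simp_all
    ultimately show ?thesis
      using planar_orthogonal_expansion[OF _ _ _ pos, of "?a $ 2" "?a $ 1" "?b $ 2" "?b $ 1" "?v $ 2" "?v $ 1"]
      by (simp add: dform_def algebra_simps)
  qed
  then show ?thesis
    using pos by (simp add: christ sum_lessThan_2 field_simps)
qed

lemma laplacian_christoffel_decomposition:
  assumes "open U" "isothermal U f" "w \<in> U"
    and "pd 0 (pd 0 f) w = (\<Sum>k<2. christoffel f k 0 0 w *\<^sub>R pd k f w) + h00 *\<^sub>R xi"
    and "pd 1 (pd 1 f) w = (\<Sum>k<2. christoffel f k 1 1 w *\<^sub>R pd k f w) + h11 *\<^sub>R xi"
  shows "pd 0 (pd 0 f) w + pd 1 (pd 1 f) w = (h00 + h11) *\<^sub>R xi"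
proof -
  have "christoffel f k 1 1 w = - christoffel f k 0 0 w" if "k < 2" for k
    using christoffel_trace_isothermal[OF assms(1-3) that] by simp
  then show ?thesis
    using assms(4,5) by (simp add: sum_lessThan_2 algebra_simps)
qed

lemma g_trace_isothermal:
  assumes "isothermal U f" "w \<in> U"
  shows "(\<Sum>i<2. \<Sum>j<2. ginv f i j w * h i j w) = (h 0 0 w + h 1 1 w) / gmet f 0 0 w"
  using ginv_isothermal[OF assms] by (simp add: sum_lessThan_2 add_divide_distrib)

theorem d_minimal_iff_harmonic:
  assumes U: "open U" "smooth_on U f" and iso: "isothermal U f"
    and pos: "\<And>w. w \<in> U \<Longrightarrow> gmet f 0 0 w > 0"
  shows "d_minimal U f \<longleftrightarrow> (\<forall>w\<in>U. pd 0 (pd 0 f) w + pd 1 (pd 1 f) w = 0)"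
proof
  assume "d_minimal U f"
  then obtain h where eq: "\<forall>w\<in>U. \<forall>i<2. \<forall>j<2.
        pd i (pd j f) w = (\<Sum>k<2. christoffel f k i j w *\<^sub>R pd k f w) + h i j w *\<^sub>R xi"
    and tr: "\<forall>w\<in>U. (\<Sum>i<2. \<Sum>j<2. ginv f i j w * h i j w) = 0"
    unfolding d_minimal_def by blast
  show "\<forall>w\<in>U. pd 0 (pd 0 f) w + pd 1 (pd 1 f) w = 0"
  proof
    fix w assume w: "w \<in> U"
    have "h 0 0 w + h 1 1 w = 0"
      using tr w pos[OF w] g_trace_isothermal[OF iso w, of h] by simp
    moreover have "pd 0 (pd 0 f) w + pd 1 (pd 1 f) w = (h 0 0 w + h 1 1 w) *\<^sub>R xi"
      using eq w by (intro laplacian_christoffel_decomposition[OF U(1) iso w]) auto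
    ultimately show "pd 0 (pd 0 f) w + pd 1 (pd 1 f) w = 0"
      by simp
  qed
next
  assume harm: "\<forall>w\<in>U. pd 0 (pd 0 f) w + pd 1 (pd 1 f) w = 0"
  define h where "h i j w = (pd i (pd j f) w - (\<Sum>k<2. christoffel f k i j w *\<^sub>R pd k f w)) $ 3"
    for i j w
  have eq: "pd i (pd j f) w = (\<Sum>k<2. christoffel f k i j w *\<^sub>R pd k f w) + h i j w *\<^sub>R xi"
    if w: "w \<in> U" and ij: "i < 2" "j < 2" for i j w
  proof -
    have "pd i (pd j f) w $ c = ((\<Sum>k<2. christoffel f k i j w *\<^sub>R pd k f w) + h i j w *\<^sub>R xi) $ c"
      for c
      using exhaust_3[of c] gauss_formula_horizontal[OF U w iso pos[OF w] ij, of c]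
      by (auto simp: h_def xi_def axis_def)
    then show ?thesis by (simp add: vec_eq_iff)
  qed
  moreover have "(\<Sum>i<2. \<Sum>j<2. ginv f i j w * h i j w) = 0" if w: "w \<in> U" for w
  proof -
    have "(h 0 0 w + h 1 1 w) *\<^sub>R xi = 0"
      using laplacian_christoffel_decomposition[OF U(1) iso w eq[OF w] eq[OF w]] harm w by simp
    then show ?thesis
      using g_trace_isothermal[OF iso w] by (simp add: xi_def)
  qed
  ultimately show "d_minimal U f"
    unfolding d_minimal_def by blast
qed

section \<open>The Weierstrass data of an isothermal immersion\<close>

lemma phi_eq:
  assumes "f differentiable (at w)"
  shows "phi f c w = Complex (pd 0 f w $ c) (- (pd 1 f w $ c))"
  using assms by (simp add: phi_def pd_vec_nth)

lemma phi_norm_sum: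
  assumes "f differentiable (at w)"
  shows "(cmod (phi f 1 w))\<^sup>2 + (cmod (phi f 2 w))\<^sup>2 = gmet f 0 0 w + gmet f 1 1 w"
  using assms unfolding cmod_power2 by (simp add: phi_eq gmet_def dform_def power2_eq_square)

lemma phi_square_sum:
  assumes "f differentiable (at w)"
  shows "(phi f 1 w)\<^sup>2 + (phi f 2 w)\<^sup>2 = Complex (gmet f 0 0 w - gmet f 1 1 w) (- 2 * gmet f 0 1 w)"
  using assms by (simp add: phi_eq complex_eq_iff gmet_def dform_def power2_eq_square algebra_simps)

lemma has_field_derivative_Cauchy_Riemann:
  fixes P Q :: "complex \<Rightarrow> real"
  assumes P: "P differentiable (at w)" and Q: "Q differentiable (at w)"
    and cr: "pd 0 P w = - pd 1 Q w" "pd 1 P w = pd 0 Q w"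
  shows "((\<lambda>z. Complex (P z) (- Q z)) has_field_derivative Complex (pd 0 P w) (- pd 0 Q w)) (at w)"
proof -
  obtain P' Q' where P': "(P has_derivative P') (at w)" and Q': "(Q has_derivative Q') (at w)"
    using P Q unfolding differentiable_def by blast
  have "((\<lambda>z. of_real (P z) + \<i> * of_real (- Q z)) has_derivative
       (\<lambda>h. of_real (P' h) + \<i> * of_real (- Q' h))) (at w)"
    by (intro has_derivative_add has_derivative_mult_right has_derivative_minus
        bounded_linear.has_derivative[OF bounded_linear_of_real] P' Q')
  moreover have "of_real (P' h) + \<i> * of_real (- Q' h) = Complex (pd 0 P w) (- pd 0 Q w) * h" for h
    using has_derivative_pd_expansion[OF P', of h] has_derivative_pd_expansion[OF Q', of h] cr
    by (simp add: complex_eq_iff algebra_simps)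
  moreover have "(\<lambda>z. Complex (P z) (- Q z)) = (\<lambda>z. of_real (P z) + \<i> * of_real (- Q z))"
    by (simp add: complex_eq_iff fun_eq_iff)
  ultimately show ?thesis
    unfolding has_field_derivative_def by simp
qed

lemma phi_holomorphic_if_harmonic:
  assumes U: "open U" "smooth_on U f" and harm: "\<forall>w\<in>U. pd 0 (pd 0 f) w + pd 1 (pd 1 f) w = 0"
  shows "phi f c holomorphic_on U"
proof -
  let ?P = "pd 0 (\<lambda>z. f z $ c)" and ?Q = "pd 1 (\<lambda>z. f z $ c)"
  have "(phi f c has_field_derivative Complex (pd 0 ?P w) (- pd 0 ?Q w)) (at w)" if w: "w \<in> U" for w
  proof -
    note nth = pd_pd_vec_nth[OF U w]
    have "pd 0 ?P w = - pd 1 ?Q w"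
      using harm w nth(1)[of 0 0 c] nth(1)[of 1 1 c] by (simp add: vec_eq_iff eq_neg_iff_add_eq_0)
    moreover have "pd 1 ?P w = pd 0 ?Q w"
      using smooth_pd_commute[OF U w, of 1 0] nth(1)[of 0 1 c] nth(1)[of 1 0 c] by simp
    moreover have "phi f c = (\<lambda>z. Complex (?P z) (- ?Q z))"
      by (simp add: phi_def fun_eq_iff)
    ultimately show ?thesis
      using has_field_derivative_Cauchy_Riemann nth(2)[of 0 c] nth(2)[of 1 c] by simp
  qed
  then show ?thesis
    using U(1) by (auto simp: holomorphic_on_open)
qed

lemma dform_isothermal_combination:
  assumes "isothermal U f" "w \<in> U"
  shows "dform (a *\<^sub>R pd 0 f w + b *\<^sub>R pd 1 f w) (a *\<^sub>R pd 0 f w + b *\<^sub>R pd 1 f w)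
    = (a\<^sup>2 + b\<^sup>2) * gmet f 0 0 w"
proof -
  have "dform (a *\<^sub>R pd 0 f w + b *\<^sub>R pd 1 f w) (a *\<^sub>R pd 0 f w + b *\<^sub>R pd 1 f w)
      = a\<^sup>2 * gmet f 0 0 w + 2 * a * b * gmet f 0 1 w + b\<^sup>2 * gmet f 1 1 w"
    by (simp add: gmet_def dform_def power2_eq_square algebra_simps)
  then show ?thesis
    using assms by (simp add: isothermal_def algebra_simps)
qed

lemma nondeg_immersion_gmet_pos:
  assumes "nondeg_immersion U f" "w \<in> U"
  shows "gmet f 0 0 w > 0"
proof -
  have "\<forall>a b::real. (a, b) \<noteq> (0, 0) \<longrightarrow>
      dform (a *\<^sub>R pd 0 f w + b *\<^sub>R pd 1 f w) (a *\<^sub>R pd 0 f w + b *\<^sub>R pd 1 f w) > 0"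
    using assms unfolding nondeg_immersion_def by blast
  from this[rule_format, of 1 0] show ?thesis
    by (simp add: gmet_def)
qed

lemma nondeg_immersion_if_isothermal:
  assumes "smooth_on U f" "isothermal U f" "\<And>w. w \<in> U \<Longrightarrow> gmet f 0 0 w > 0"
  shows "nondeg_immersion U f"
proof -
  have pos: "\<forall>w\<in>U. \<forall>a b. (a, b) \<noteq> (0, 0) \<longrightarrow>
      dform (a *\<^sub>R pd 0 f w + b *\<^sub>R pd 1 f w) (a *\<^sub>R pd 0 f w + b *\<^sub>R pd 1 f w) > 0"
  proof (intro ballI allI impI)
    fix w a b assume "w \<in> U" "(a::real, b::real) \<noteq> (0, 0)"
    then show "dform (a *\<^sub>R pd 0 f w + b *\<^sub>R pd 1 f w) (a *\<^sub>R pd 0 f w + b *\<^sub>R pd 1 f w) > 0"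
      using dform_isothermal_combination[OF assms(2)] assms(3)
      by (simp add: sum_power2_gt_zero_iff)
  qed
  have "\<forall>w\<in>U. \<forall>a b. a *\<^sub>R pd 0 f w + b *\<^sub>R pd 1 f w = 0 \<longrightarrow> a = 0 \<and> b = 0"
  proof (intro ballI allI impI)
    fix w a b assume w: "w \<in> U" and ab: "a *\<^sub>R pd 0 f w + b *\<^sub>R pd 1 f w = 0"
    show "a = 0 \<and> b = 0"
    proof (rule ccontr)
      assume "\<not> (a = 0 \<and> b = 0)"
      then show False
        using pos[rule_format, OF w, of a b] unfolding ab by (simp add: dform_def)
    qed
  qed
  with pos assms(1) show ?thesis
    unfolding nondeg_immersion_def immersion_def by (intro conjI)
qed

theorem phi_of_d_minimal_isothermal:
  assumes U: "open U" and nd: "nondeg_immersion U f" and dm: "d_minimal U f"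
    and iso: "isothermal U f"
  shows "phi f 1 holomorphic_on U \<and> phi f 2 holomorphic_on U \<and> phi f 3 holomorphic_on U \<and>
    (\<forall>w\<in>U. (cmod (phi f 1 w))\<^sup>2 + (cmod (phi f 2 w))\<^sup>2 > 0 \<and> (phi f 1 w)\<^sup>2 + (phi f 2 w)\<^sup>2 = 0) \<and>
    (\<forall>w\<in>U. dform (pd 0 f w) (pd 0 f w) = dform (pd 1 f w) (pd 1 f w) \<and>
      dform (pd 0 f w) (pd 0 f w) = ((cmod (phi f 1 w))\<^sup>2 + (cmod (phi f 2 w))\<^sup>2) / 2)"
proof -
  have sm: "smooth_on U f"
    using nd unfolding nondeg_immersion_def immersion_def by blast
  have pos: "gmet f 0 0 w > 0" if "w \<in> U" for w
    using nondeg_immersion_gmet_pos[OF nd that] .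
  have "\<forall>w\<in>U. pd 0 (pd 0 f) w + pd 1 (pd 1 f) w = 0"
    using dm d_minimal_iff_harmonic[OF U sm iso pos] by blast
  then have "phi f c holomorphic_on U" for c
    using phi_holomorphic_if_harmonic[OF U sm] by blast
  moreover have "(cmod (phi f 1 w))\<^sup>2 + (cmod (phi f 2 w))\<^sup>2 > 0 \<and> (phi f 1 w)\<^sup>2 + (phi f 2 w)\<^sup>2 = 0"
    "dform (pd 0 f w) (pd 0 f w) = dform (pd 1 f w) (pd 1 f w) \<and>
      dform (pd 0 f w) (pd 0 f w) = ((cmod (phi f 1 w))\<^sup>2 + (cmod (phi f 2 w))\<^sup>2) / 2"
    if w: "w \<in> U" for w
  proof -
    have df: "f differentiable (at w)"
      using smooth_on_differentiable_at[OF U sm, of "[]" w] w by simp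
    have "gmet f 1 1 w = gmet f 0 0 w" "gmet f 0 1 w = 0"
      using iso w unfolding isothermal_def by auto
    then have "(cmod (phi f 1 w))\<^sup>2 + (cmod (phi f 2 w))\<^sup>2 = 2 * gmet f 0 0 w"
      "(phi f 1 w)\<^sup>2 + (phi f 2 w)\<^sup>2 = 0" "gmet f 1 1 w = gmet f 0 0 w"
      by (simp_all add: phi_norm_sum[OF df] phi_square_sum[OF df] complex_eq_iff)
    then show "(cmod (phi f 1 w))\<^sup>2 + (cmod (phi f 2 w))\<^sup>2 > 0 \<and> (phi f 1 w)\<^sup>2 + (phi f 2 w)\<^sup>2 = 0"
      "dform (pd 0 f w) (pd 0 f w) = dform (pd 1 f w) (pd 1 f w) \<and>
        dform (pd 0 f w) (pd 0 f w) = ((cmod (phi f 1 w))\<^sup>2 + (cmod (phi f 2 w))\<^sup>2) / 2"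
      using pos[OF w] by (simp_all add: gmet_def[symmetric])
  qed
  ultimately show ?thesis
    by blast
qed

section \<open>The representation formula\<close>

lemma has_derivative_Re_vector3:
  assumes "open U" "w \<in> U" "A1 holomorphic_on U" "A2 holomorphic_on U" "A3 holomorphic_on U"
  shows "((\<lambda>z. vector [Re (A1 z), Re (A2 z), Re (A3 z)] :: real^3) has_derivative
     (\<lambda>h. vector [Re (deriv A1 w * h), Re (deriv A2 w * h), Re (deriv A3 w * h)])) (at w)"
proof -
  have Re: "((\<lambda>z. Re (A z)) has_derivative (\<lambda>h. Re (deriv A w * h))) (at w)"
    if "A holomorphic_on U" for A
    using bounded_linear.has_derivative[OF bounded_linear_Re
        holomorphic_derivI[OF that assms(1,2), unfolded has_field_derivative_def]] .
  have "vector [a, b, c] = a *\<^sub>R axis 1 1 + b *\<^sub>R axis 2 1 + c *\<^sub>R (axis 3 1 :: real^3)" for a b c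
    by (simp add: vec_eq_iff forall_3 axis_def)
  then show ?thesis
    by (simp only:) (intro has_derivative_add has_derivative_scaleR_left Re assms(3-5))
qed

lemma
  fixes F :: "complex \<Rightarrow> real^3"
  assumes U: "open U" "w \<in> U" and F: "\<forall>z\<in>U. F z = vector [Re (A1 z), Re (A2 z), Re (A3 z)]"
    and H: "A1 holomorphic_on U" "A2 holomorphic_on U" "A3 holomorphic_on U"
  shows pd_Re_vector3:
      "pd k F w = vector [Re (dir k * deriv A1 w), Re (dir k * deriv A2 w), Re (dir k * deriv A3 w)]"
    and differentiable_Re_vector3: "F differentiable (at w)"
proof -
  have "pd k F w = pd k (\<lambda>z. vector [Re (A1 z), Re (A2 z), Re (A3 z)] :: real^3) w"
    by (rule pd_cong[OF U]) (use F in blast)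
  then show "pd k F w = vector [Re (dir k * deriv A1 w), Re (dir k * deriv A2 w), Re (dir k * deriv A3 w)]"
    using pd_has_derivative[OF has_derivative_Re_vector3[OF U H]] by (simp add: mult.commute)
  have "(\<lambda>z. vector [Re (A1 z), Re (A2 z), Re (A3 z)] :: real^3) differentiable (at w)"
    using has_derivative_Re_vector3[OF U H] unfolding differentiable_def by blast
  then show "F differentiable (at w)"
    by (rule differentiable_transform_open[OF U, rotated]) (use F in auto)
qed

lemma smooth_on_Re_vector3:
  fixes F :: "complex \<Rightarrow> real^3"
  assumes U: "open U" and F: "\<forall>z\<in>U. F z = vector [Re (A1 z), Re (A2 z), Re (A3 z)]"
    and H: "A1 holomorphic_on U" "A2 holomorphic_on U" "A3 holomorphic_on U"
  shows "smooth_on U F"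
proof -
  have iter: "\<exists>B1 B2 B3. B1 holomorphic_on U \<and> B2 holomorphic_on U \<and> B3 holomorphic_on U \<and>
     (\<forall>z\<in>U. iter_pd ks F z = vector [Re (B1 z), Re (B2 z), Re (B3 z)])" for ks
  proof (induction ks)
    case Nil
    then show ?case using F H by auto
  next
    case (Cons k ks)
    then obtain B1 B2 B3 where B: "B1 holomorphic_on U" "B2 holomorphic_on U" "B3 holomorphic_on U"
       "\<forall>z\<in>U. iter_pd ks F z = vector [Re (B1 z), Re (B2 z), Re (B3 z)]" by blast
    have "(\<lambda>z. dir k * deriv B z) holomorphic_on U" if "B holomorphic_on U" for B
      by (intro holomorphic_on_mult holomorphic_on_const holomorphic_deriv that U)
    then show ?case
      using B pd_Re_vector3[OF U _ B(4) B(1-3)]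
      by (intro exI[of _ "\<lambda>z. dir k * deriv B1 z"] exI[of _ "\<lambda>z. dir k * deriv B2 z"]
          exI[of _ "\<lambda>z. dir k * deriv B3 z"]) simp
  qed
  have "iter_pd ks F differentiable_on U" for ks
  proof -
    obtain B1 B2 B3 where B: "B1 holomorphic_on U" "B2 holomorphic_on U" "B3 holomorphic_on U"
       "\<forall>z\<in>U. iter_pd ks F z = vector [Re (B1 z), Re (B2 z), Re (B3 z)]"
      using iter by blast
    show ?thesis
      using differentiable_Re_vector3[OF U _ B(4) B(1-3)] U
      by (simp add: differentiable_on_eq_differentiable_at)
  qed
  then show ?thesis
    by (simp add: smooth_on_def differentiable_imp_continuous_on)
qed

lemma primitive_vanishing_at:
  assumes "open U" "simply_connected U" "w0 \<in> U" "p holomorphic_on U"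
  obtains Q where "\<And>z. z \<in> U \<Longrightarrow> (Q has_field_derivative p z) (at z)" "Q w0 = 0"
proof -
  have "\<exists>G. \<forall>z. z \<in> U \<longrightarrow> (G has_field_derivative p z) (at z)"
    using simply_connected_eq_global_primitive[OF assms(1)] assms(2,4) by blast
  then obtain G where G: "\<forall>z. z \<in> U \<longrightarrow> (G has_field_derivative p z) (at z)"
    by blast
  show ?thesis
  proof (rule that)
    show "((\<lambda>z. G z - G w0) has_field_derivative p z) (at z)" if "z \<in> U" for z
      using G that by (auto intro!: derivative_eq_intros)
  qed simp
qed

lemma has_contour_integral_primitive_from:
  assumes "\<And>z. z \<in> U \<Longrightarrow> (Q has_field_derivative p z) (at z)" "Q w0 = 0"
    "valid_path \<gamma>" "path_image \<gamma> \<subseteq> U" "pathstart \<gamma> = w0" "pathfinish \<gamma> = w"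
  shows "(p has_contour_integral Q w) \<gamma>"
  using contour_integral_primitive[of U Q p \<gamma>] assms
  by (auto intro: has_field_derivative_at_within)

lemma Re_primitive_d_minimal:
  fixes f :: "complex \<Rightarrow> real^3"
  assumes U: "open U"
    and Q: "\<And>z. z \<in> U \<Longrightarrow> (Q1 has_field_derivative p1 z) (at z)"
      "\<And>z. z \<in> U \<Longrightarrow> (Q2 has_field_derivative p2 z) (at z)"
      "\<And>z. z \<in> U \<Longrightarrow> (Q3 has_field_derivative p3 z) (at z)"
    and H: "p1 holomorphic_on U" "p2 holomorphic_on U" "p3 holomorphic_on U"
    and null: "\<forall>w\<in>U. (cmod (p1 w))\<^sup>2 + (cmod (p2 w))\<^sup>2 > 0 \<and> (p1 w)\<^sup>2 + (p2 w)\<^sup>2 = 0"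
    and f: "f = (\<lambda>w. vector [Re (Q1 w), Re (Q2 w), Re (Q3 w)])"
  shows "nondeg_immersion U f \<and> d_minimal U f \<and> isothermal U f \<and>
    (\<forall>w\<in>U. p1 w = phi f 1 w \<and> p2 w = phi f 2 w \<and> p3 w = phi f 3 w)"
proof -
  have QH: "Q1 holomorphic_on U" "Q2 holomorphic_on U" "Q3 holomorphic_on U"
    using Q U by (auto simp: holomorphic_on_open)
  have fU: "\<forall>z\<in>U. f z = vector [Re (Q1 z), Re (Q2 z), Re (Q3 z)]"
    using f by simp
  have sm: "smooth_on U f"
    using smooth_on_Re_vector3[OF U fU QH] .
  have df: "f differentiable (at z)" if "z \<in> U" for z
    using differentiable_Re_vector3[OF U that fU QH] .
  have pdf: "pd k f z = vector [Re (dir k * p1 z), Re (dir k * p2 z), Re (dir k * p3 z)]"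
    if "z \<in> U" for k z
  proof -
    have "deriv Q1 z = p1 z" "deriv Q2 z = p2 z" "deriv Q3 z = p3 z"
      using Q that by (simp_all add: DERIV_imp_deriv)
    then show ?thesis
      using pd_Re_vector3[OF U that fU QH, of k] by simp
  qed
  have phi: "phi f 1 w = p1 w" "phi f 2 w = p2 w" "phi f 3 w = p3 w" if "w \<in> U" for w
    using phi_eq[OF df[OF that]] pdf[OF that] by (simp_all add: dir_def complex_eq_iff)
  have "gmet f 0 0 w = gmet f 1 1 w \<and> gmet f 0 1 w = 0" and pos: "gmet f 0 0 w > 0"
    if w: "w \<in> U" for w
  proof -
    have "gmet f 0 0 w + gmet f 1 1 w > 0"
      using phi_norm_sum[OF df[OF w]] phi[OF w] null[rule_format, OF w] by simp
    moreover have "Complex (gmet f 0 0 w - gmet f 1 1 w) (- 2 * gmet f 0 1 w) = 0"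
      using phi_square_sum[OF df[OF w]] phi[OF w] null[rule_format, OF w] by simp
    ultimately show "gmet f 0 0 w = gmet f 1 1 w \<and> gmet f 0 1 w = 0" "gmet f 0 0 w > 0"
      by (simp_all add: complex_eq_iff)
  qed
  then have iso: "isothermal U f"
    by (simp add: isothermal_def)
  have "\<forall>w\<in>U. pd 0 (pd 0 f) w + pd 1 (pd 1 f) w = 0"
  proof
    fix w assume w: "w \<in> U"
    have hol: "(\<lambda>z. dir j * p z) holomorphic_on U" if "p holomorphic_on U" for j p
      using that by (intro holomorphic_on_mult holomorphic_on_const)
    have deriv: "deriv (\<lambda>z. dir j * p z) w = dir j * deriv p w" if "p holomorphic_on U" for j p
      by (rule deriv_cmult) (use holomorphic_on_imp_differentiable_at[OF that U w] in simp)
    have "pd i (pd j f) w = vector [Re (dir i * (dir j * deriv p1 w)),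
        Re (dir i * (dir j * deriv p2 w)), Re (dir i * (dir j * deriv p3 w))]" for i j
    proof -
      have "\<forall>z\<in>U. pd j f z = vector [Re ((\<lambda>z. dir j * p1 z) z), Re ((\<lambda>z. dir j * p2 z) z),
          Re ((\<lambda>z. dir j * p3 z) z)]"
        using pdf by simp
      from pd_Re_vector3[OF U w this hol[OF H(1)] hol[OF H(2)] hol[OF H(3)], of i]
      show ?thesis
        by (simp only: deriv[OF H(1)] deriv[OF H(2)] deriv[OF H(3)])
    qed
    then show "pd 0 (pd 0 f) w + pd 1 (pd 1 f) w = 0"
      by (simp add: dir_def vec_eq_iff forall_3)
  qed
  then have "d_minimal U f"
    using d_minimal_iff_harmonic[OF U sm iso pos] by blast
  then show ?thesis
    using nondeg_immersion_if_isothermal[OF sm iso pos] iso phi by simp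
qed

theorem weierstrass_representation:
  assumes U: "open U" "simply_connected U" "w0 \<in> U"
    and H: "\<phi>1 holomorphic_on U" "\<phi>2 holomorphic_on U" "\<phi>3 holomorphic_on U"
    and null: "\<forall>w\<in>U. (cmod (\<phi>1 w))\<^sup>2 + (cmod (\<phi>2 w))\<^sup>2 > 0 \<and> (\<phi>1 w)\<^sup>2 + (\<phi>2 w)\<^sup>2 = 0"
  shows "\<exists>\<Phi>1 \<Phi>2 \<Phi>3 :: complex \<Rightarrow> complex.
     (\<forall>w\<in>U. \<forall>\<gamma>. valid_path \<gamma> \<and> path_image \<gamma> \<subseteq> U \<and> pathstart \<gamma> = w0 \<and> pathfinish \<gamma> = w \<longrightarrow>
        (\<phi>1 has_contour_integral \<Phi>1 w) \<gamma> \<and> (\<phi>2 has_contour_integral \<Phi>2 w) \<gamma> \<and>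
        (\<phi>3 has_contour_integral \<Phi>3 w) \<gamma>) \<and>
     (let f = (\<lambda>w. vector [Re (\<Phi>1 w), Re (\<Phi>2 w), Re (\<Phi>3 w)] :: real^3) in
        nondeg_immersion U f \<and> d_minimal U f \<and> isothermal U f \<and>
        (\<forall>w\<in>U. \<phi>1 w = phi f 1 w \<and> \<phi>2 w = phi f 2 w \<and> \<phi>3 w = phi f 3 w))"
proof -
  obtain Q1 where Q1: "\<And>z. z \<in> U \<Longrightarrow> (Q1 has_field_derivative \<phi>1 z) (at z)" "Q1 w0 = 0"
    using primitive_vanishing_at[OF U H(1)] by blast
  obtain Q2 where Q2: "\<And>z. z \<in> U \<Longrightarrow> (Q2 has_field_derivative \<phi>2 z) (at z)" "Q2 w0 = 0"
    using primitive_vanishing_at[OF U H(2)] by blast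
  obtain Q3 where Q3: "\<And>z. z \<in> U \<Longrightarrow> (Q3 has_field_derivative \<phi>3 z) (at z)" "Q3 w0 = 0"
    using primitive_vanishing_at[OF U H(3)] by blast
  have "\<forall>w\<in>U. \<forall>\<gamma>. valid_path \<gamma> \<and> path_image \<gamma> \<subseteq> U \<and> pathstart \<gamma> = w0 \<and> pathfinish \<gamma> = w \<longrightarrow>
      (\<phi>1 has_contour_integral Q1 w) \<gamma> \<and> (\<phi>2 has_contour_integral Q2 w) \<gamma> \<and>
      (\<phi>3 has_contour_integral Q3 w) \<gamma>"
  proof (intro ballI allI impI)
    fix w \<gamma>
    assume "valid_path \<gamma> \<and> path_image \<gamma> \<subseteq> U \<and> pathstart \<gamma> = w0 \<and> pathfinish \<gamma> = w"
    then show "(\<phi>1 has_contour_integral Q1 w) \<gamma> \<and> (\<phi>2 has_contour_integral Q2 w) \<gamma> \<and>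
        (\<phi>3 has_contour_integral Q3 w) \<gamma>"
      using has_contour_integral_primitive_from[OF Q1] has_contour_integral_primitive_from[OF Q2]
        has_contour_integral_primitive_from[OF Q3] by simp
  qed
  moreover have "let f = (\<lambda>w. vector [Re (Q1 w), Re (Q2 w), Re (Q3 w)] :: real^3) in
      nondeg_immersion U f \<and> d_minimal U f \<and> isothermal U f \<and>
      (\<forall>w\<in>U. \<phi>1 w = phi f 1 w \<and> \<phi>2 w = phi f 2 w \<and> \<phi>3 w = phi f 3 w)"
    unfolding Let_def by (rule Re_primitive_d_minimal[OF U(1) Q1(1) Q2(1) Q3(1) H null refl])
  ultimately show ?thesis
    by blast
qed

theorem theorem4p2p1:
  shows
  "(\<forall>(U::complex set) (f::complex \<Rightarrow> real^3).
      open U \<and> nondeg_immersion U f \<and> d_minimal U f \<and> isothermal U f \<longrightarrow>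
        phi f 1 holomorphic_on U \<and> phi f 2 holomorphic_on U \<and> phi f 3 holomorphic_on U \<and>
        (\<forall>w\<in>U. (cmod (phi f 1 w))\<^sup>2 + (cmod (phi f 2 w))\<^sup>2 > 0 \<and>
                (phi f 1 w)\<^sup>2 + (phi f 2 w)\<^sup>2 = 0) \<and>
        (\<forall>w\<in>U. dform (pd 0 f w) (pd 0 f w) = dform (pd 1 f w) (pd 1 f w) \<and>
                dform (pd 0 f w) (pd 0 f w) = ((cmod (phi f 1 w))\<^sup>2 + (cmod (phi f 2 w))\<^sup>2) / 2))
   \<and>
   (\<forall>(U::complex set) (\<phi>1::complex \<Rightarrow> complex) \<phi>2 \<phi>3 w0.
      open U \<and> connected U \<and> simply_connected U \<and> w0 \<in> U \<and>
      \<phi>1 holomorphic_on U \<and> \<phi>2 holomorphic_on U \<and> \<phi>3 holomorphic_on U \<and>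
      (\<forall>w\<in>U. (cmod (\<phi>1 w))\<^sup>2 + (cmod (\<phi>2 w))\<^sup>2 > 0 \<and> (\<phi>1 w)\<^sup>2 + (\<phi>2 w)\<^sup>2 = 0) \<longrightarrow>
      (\<exists>\<Phi>1 \<Phi>2 \<Phi>3 :: complex \<Rightarrow> complex.
         (\<forall>w\<in>U. \<forall>\<gamma>. valid_path \<gamma> \<and> path_image \<gamma> \<subseteq> U \<and>
              pathstart \<gamma> = w0 \<and> pathfinish \<gamma> = w \<longrightarrow>
              (\<phi>1 has_contour_integral \<Phi>1 w) \<gamma> \<and>
              (\<phi>2 has_contour_integral \<Phi>2 w) \<gamma> \<and>
              (\<phi>3 has_contour_integral \<Phi>3 w) \<gamma>) \<and>
         (let f = (\<lambda>w. vector [Re (\<Phi>1 w), Re (\<Phi>2 w), Re (\<Phi>3 w)] :: real^3) in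
            nondeg_immersion U f \<and> d_minimal U f \<and> isothermal U f \<and>
            (\<forall>w\<in>U. \<phi>1 w = phi f 1 w \<and> \<phi>2 w = phi f 2 w \<and> \<phi>3 w = phi f 3 w))))"
proof ((rule conjI; intro allI impI), goal_cases)
  case (1 U f)
  then show ?case
    using phi_of_d_minimal_isothermal by blast
next
  case (2 U \<phi>1 \<phi>2 \<phi>3 w0)
  then show ?case
    using weierstrass_representation[of U w0 \<phi>1 \<phi>2 \<phi>3] by blast
qed

end
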